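(* Let $\delta\in(0,1)$. Then $$\mathbb P\Big(\sum_{j=\lceil(1-\delta^2)m\rceil}^{m-1}\psi_{j,z}\le \tfrac52\delta\log N\ \text{ for all } z\in V_N\Big)\ge 1-2e^{-n/10}.$$ Moreover, $$\mathbb P\Big(|\varphi_{N,u}-\varphi_{N,v}|\le 100\sqrt{K\log N}\ \text{ for all nearest-neighbour pairs } u,v\in V_N\Big)\ge 1-e^{-n/10}.$$
   Context: Let $k\ge1$ be an integer, $K=2^k$, $n\ge1$, $N=2^n$, $m=\lfloor n/k\rfloor$, and $V_N=\{0,1,\dots,N-1\}^2$; $\log$ is the natural logarithm. For $j\ge0$ let $\mathcal B_j$ be the set of boxes $x+\{0,\dots,2^j-1\}^2$ with $x\in\mathbb Z^2$, and $\mathcal B_j(z)$ those containing $z$. Let $\{b_{j,B}\}$ be independent centered Gaussians with $\mathrm{Var}(b_{j,B})=2^{-2j}$. Set $\psi_{j,z}=\sum_{B\in\mathcal B_{jk}(z)}\sqrt k\,b_{jk,B}$ and $\varphi_{N,z}=\sum_{j=0}^{m-1}\psi_{j,z}$. *)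

theory Defs
  imports "HOL-Probability.Probability"
begin

text \<open>A box x + {0..2^j-1}^2 is identified with its corner x. The boxes of side 2^j
  containing z are exactly those with corner in z - {0..2^j-1}^2.\<close>
definition boxes_containing :: "nat \<Rightarrow> int \<times> int \<Rightarrow> (int \<times> int) set" where
  "boxes_containing j z =
     {fst z - 2^j + 1 .. fst z} \<times> {snd z - 2^j + 1 .. snd z}"

definition psi :: "nat \<Rightarrow> (nat \<Rightarrow> int \<times> int \<Rightarrow> 'a \<Rightarrow> real) \<Rightarrow> nat \<Rightarrow> int \<times> int \<Rightarrow> 'a \<Rightarrow> real" where
  "psi k b j z \<omega> = (\<Sum>x\<in>boxes_containing (j * k) z. sqrt (real k) * b (j * k) x \<omega>)"

definition phi :: "nat \<Rightarrow> nat \<Rightarrow> (nat \<Rightarrow> int \<times> int \<Rightarrow> 'a \<Rightarrow> real) \<Rightarrow> int \<times> int \<Rightarrow> 'a \<Rightarrow> real" where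
  "phi k n b z \<omega> = (\<Sum>j<n div k. psi k b j z \<omega>)"

definition VN :: "nat \<Rightarrow> (int \<times> int) set" where
  "VN n = {0..<2^n} \<times> {0..<2^n}"

end

theory Submission
  imports Defs "HOL-Analysis.Harmonic_Numbers"
begin

text \<open>
  A sum of the variables \<open>\<surd>k b\<^sub>j\<^sub>k\<^sub>,\<^sub>B\<close> with signs \<open>\<plusminus>1\<close> is a centred Gaussian, so it
  exceeds \<open>t\<close> with probability at most \<open>exp (-t\<^sup>2 / 2V)\<close> for any bound \<open>V\<close> on its variance
  (compare the normal density with its translate by \<open>t\<close>). Scale \<open>L\<close> contributes \<open>4\<^sup>L\<close> boxes
  containing a given point, each of variance \<open>4\<^sup>-\<^sup>L\<close>, so a sum of \<open>\<psi>\<^sub>j\<^sub>,\<^sub>z\<close> over the top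
  \<open>\<delta>\<^sup>2\<close>-fraction of the \<open>m\<close> scales has variance at most \<open>k\<delta>\<^sup>2m \<le> \<delta>\<^sup>2n\<close>. For neighbours
  \<open>u, v\<close> only the boxes containing exactly one of them survive in \<open>\<phi>\<^sub>u - \<phi>\<^sub>v\<close>; at scale \<open>L\<close> there
  are at most \<open>4 \<cdot> 2\<^sup>L\<close> of them on each side, so the variance is at most \<open>16k\<close>. A union bound
  over the \<open>4\<^sup>n\<close> points, respectively the at most \<open>16\<^sup>n\<close> pairs, finishes both estimates.
\<close>

lemma normal_density_shift_le:
  fixes \<sigma> t x :: real
  assumes "t \<ge> 0"
  shows "normal_density 0 \<sigma> x * indicator {t<..} x \<le> exp (- t\<^sup>2 / (2 * \<sigma>\<^sup>2)) * normal_density 0 \<sigma> (x - t)"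
proof (cases "x > t")
  case True
  have "- x\<^sup>2 \<le> - t\<^sup>2 - (x - t)\<^sup>2"
    using True assms mult_left_mono[of t x t] by (simp add: power2_eq_square algebra_simps)
  then have "- x\<^sup>2 / (2 * \<sigma>\<^sup>2) \<le> (- t\<^sup>2 - (x - t)\<^sup>2) / (2 * \<sigma>\<^sup>2)"
    by (rule divide_right_mono) simp
  then have "exp (- x\<^sup>2 / (2 * \<sigma>\<^sup>2)) \<le> exp (- t\<^sup>2 / (2 * \<sigma>\<^sup>2)) * exp (- (x - t)\<^sup>2 / (2 * \<sigma>\<^sup>2))"
    by (simp add: diff_divide_distrib flip: exp_add)
  then show ?thesis
    using True by (simp add: normal_density_def mult.left_commute[of "exp _"] divide_right_mono)
qed (simp)

lemma (in prob_space) normal_tail_le: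
  assumes X: "distributed M lborel X (normal_density 0 \<sigma>)" and "0 < \<sigma>" "0 \<le> t"
  shows "prob {\<omega> \<in> space M. X \<omega> > t} \<le> exp (- t\<^sup>2 / (2 * \<sigma>\<^sup>2))"
proof -
  let ?c = "exp (- t\<^sup>2 / (2 * \<sigma>\<^sup>2))"
  have "emeasure M {\<omega> \<in> space M. X \<omega> > t}
      = (\<integral>\<^sup>+x. ennreal (normal_density 0 \<sigma> x) * indicator {t<..} x \<partial>lborel)"
    using distributed_emeasure[OF X, of "{t<..}"] by (simp add: vimage_def Int_def conj_commute)
  also have "\<dots> \<le> (\<integral>\<^sup>+x. ennreal ?c * ennreal (normal_density 0 \<sigma> (x - t)) \<partial>lborel)"
    using normal_density_shift_le[OF \<open>0 \<le> t\<close>]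
    by (intro nn_integral_mono)
       (metis ennreal_leI ennreal_mult' exp_ge_zero indicator_mult_ennreal mult.commute)
  also have "\<dots> = ennreal ?c * (\<integral>\<^sup>+x. ennreal (normal_density 0 \<sigma> (t + 1 * x - t)) \<partial>lborel)"
    using nn_integral_real_affine[where c=1 and t=t and f="\<lambda>x. ennreal (normal_density 0 \<sigma> (x - t))"]
    by (simp add: nn_integral_cmult)
  also have "(\<integral>\<^sup>+x. ennreal (normal_density 0 \<sigma> (t + 1 * x - t)) \<partial>lborel) = 1"
    using \<open>0 < \<sigma>\<close> by (simp add: nn_integral_eq_integral)
  finally show ?thesis
    by (simp add: emeasure_eq_measure ennreal_le_iff)
qed

lemma (in prob_space) indep_normal_sum_tail_le:
  assumes "finite I" and indep: "indep_vars (\<lambda>_. borel) X I"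
    and normal: "\<And>i. i \<in> I \<Longrightarrow> distributed M lborel (X i) (normal_density 0 (\<sigma> i))"
    and pos: "\<And>i. i \<in> I \<Longrightarrow> 0 < \<sigma> i" and nonzero: "\<And>i. i \<in> I \<Longrightarrow> c i \<noteq> 0"
    and V: "(\<Sum>i\<in>I. (c i * \<sigma> i)\<^sup>2) \<le> V" and "0 \<le> t"
  shows "prob {\<omega> \<in> space M. (\<Sum>i\<in>I. c i * X i \<omega>) > t} \<le> exp (- t\<^sup>2 / (2 * V))"
proof (cases "I = {}")
  case True
  then show ?thesis using \<open>0 \<le> t\<close> by simp
next
  case False
  define s where "s = sqrt (\<Sum>i\<in>I. (\<bar>c i\<bar> * \<sigma> i)\<^sup>2)"
  have "0 < (\<Sum>i\<in>I. (\<bar>c i\<bar> * \<sigma> i)\<^sup>2)"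
    using pos nonzero \<open>finite I\<close> False by (intro sum_pos) fastforce+
  then have s: "0 < s" "s\<^sup>2 \<le> V"
    using V by (simp_all add: s_def power_mult_distrib)
  have "distributed M lborel (\<lambda>\<omega>. \<Sum>i\<in>I. c i * X i \<omega>) (normal_density (\<Sum>i\<in>I. 0) s)"
    unfolding s_def
  proof (rule sum_indep_normal[OF \<open>finite I\<close> False])
    show "indep_vars (\<lambda>_. borel) (\<lambda>i \<omega>. c i * X i \<omega>) I"
      using indep by (rule indep_vars_compose2[where Y="\<lambda>i x. c i * x"]) simp
    show "distributed M lborel (\<lambda>\<omega>. c i * X i \<omega>) (normal_density 0 (\<bar>c i\<bar> * \<sigma> i))" if "i \<in> I" for i
      using normal_density_affine[OF normal[OF that] pos[OF that] nonzero[OF that], where \<beta>=0] by simp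
  qed (use pos nonzero in simp)
  then have "prob {\<omega> \<in> space M. (\<Sum>i\<in>I. c i * X i \<omega>) > t} \<le> exp (- t\<^sup>2 / (2 * s\<^sup>2))"
    using \<open>0 \<le> t\<close> s by (intro normal_tail_le) simp_all
  also have "\<dots> \<le> exp (- t\<^sup>2 / (2 * V))"
    using s by (simp add: frac_le)
  finally show ?thesis .
qed

lemma (in prob_space) indep_normal_sum_abs_tail_le:
  assumes "finite I" and "indep_vars (\<lambda>_. borel) X I"
    and "\<And>i. i \<in> I \<Longrightarrow> distributed M lborel (X i) (normal_density 0 (\<sigma> i))"
    and "\<And>i. i \<in> I \<Longrightarrow> 0 < \<sigma> i" and "\<And>i. i \<in> I \<Longrightarrow> c i \<noteq> 0"
    and "(\<Sum>i\<in>I. (c i * \<sigma> i)\<^sup>2) \<le> V" and "0 \<le> t"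
  shows "prob {\<omega> \<in> space M. \<bar>\<Sum>i\<in>I. c i * X i \<omega>\<bar> > t} \<le> 2 * exp (- t\<^sup>2 / (2 * V))"
proof -
  have [measurable]: "X i \<in> borel_measurable M" if "i \<in> I" for i
    using distributed_measurable[OF assms(3)[OF that]] by simp
  let ?S = "\<lambda>c \<omega>. \<Sum>i\<in>I. c i * X i \<omega>"
  have "{\<omega> \<in> space M. \<bar>?S c \<omega>\<bar> > t} =
        {\<omega> \<in> space M. ?S c \<omega> > t} \<union> {\<omega> \<in> space M. ?S (\<lambda>i. - c i) \<omega> > t}"
    by (auto simp: sum_negf)
  also have "prob \<dots> \<le> prob {\<omega> \<in> space M. ?S c \<omega> > t} + prob {\<omega> \<in> space M. ?S (\<lambda>i. - c i) \<omega> > t}"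
    by (rule measure_Un_le) (use assms(1) in measurable)
  also have "\<dots> \<le> exp (- t\<^sup>2 / (2 * V)) + exp (- t\<^sup>2 / (2 * V))"
    using assms by (intro add_mono indep_normal_sum_tail_le[where \<sigma>=\<sigma>]) simp_all
  finally show ?thesis by simp
qed

lemma (in prob_space) prob_forall_ge_union_bound:
  assumes "finite I" and "\<And>i. i \<in> I \<Longrightarrow> {\<omega> \<in> space M. \<not> P i \<omega>} \<in> events"
    and "\<And>i. i \<in> I \<Longrightarrow> prob {\<omega> \<in> space M. \<not> P i \<omega>} \<le> \<epsilon>"
  shows "prob {\<omega> \<in> space M. \<forall>i\<in>I. P i \<omega>} \<ge> 1 - real (card I) * \<epsilon>"
proof -
  let ?B = "\<Union>i\<in>I. {\<omega> \<in> space M. \<not> P i \<omega>}"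
  have "prob ?B \<le> (\<Sum>i\<in>I. prob {\<omega> \<in> space M. \<not> P i \<omega>})"
    using assms(1,2) by (rule measure_UNION_le)
  also have "\<dots> \<le> real (card I) * \<epsilon>"
    using sum_mono[OF assms(3)] by simp
  finally have "prob ?B \<le> real (card I) * \<epsilon>" .
  moreover have "?B \<in> events"
    using assms(1,2) by blast
  moreover have "{\<omega> \<in> space M. \<forall>i\<in>I. P i \<omega>} = space M - ?B" by auto
  ultimately show ?thesis
    by (simp add: prob_compl)
qed

lemma sum_diff_sum_eq_signed_sum:
  fixes f :: "'a \<Rightarrow> 'b :: ab_group_add"
  assumes "finite A" "finite B"
  shows "sum f A - sum f B = (\<Sum>x\<in>sym_diff A B. (if x \<in> A then f x else - f x))"
proof -
  have "sum f A - sum f B = sum f (A - B) - sum f (B - A)"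
    using sum.Int_Diff[OF assms(1), of f B] sum.Int_Diff[OF assms(2), of f A]
    by (simp add: Int_commute)
  also have "\<dots> = (\<Sum>x\<in>sym_diff A B. (if x \<in> A then f x else - f x))"
    using assms by (subst sum.union_disjoint) (auto simp: sum_negf intro!: sum.cong)
  finally show ?thesis .
qed

lemma sum_half_powers_le_two:
  assumes "finite (S :: nat set)"
  shows "(\<Sum>L\<in>S. (1/2::real) ^ L) \<le> 2"
proof -
  have "(\<Sum>L\<in>S. (1/2::real) ^ L) \<le> (\<Sum>L<Suc (Max S). (1/2) ^ L)"
    using assms by (intro sum_mono2) (auto simp: less_Suc_eq_le)
  also have "\<dots> \<le> 2"
    by (simp add: sum_gp_strict)
  finally show ?thesis .
qed

lemma two_powr_neg_squared: "(2 powr - real L)\<^sup>2 = (1/4::real) ^ L"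
  by (simp add: powr_minus powr_realpow power2_eq_square inverse_eq_divide power_one_over flip: power_mult_distrib)

lemma finite_boxes_containing [simp]: "finite (boxes_containing L z)"
  by (simp add: boxes_containing_def)

lemma card_boxes_containing: "card (boxes_containing L z) = 4 ^ L"
  by (simp add: boxes_containing_def card_cartesian_product nat_power_eq flip: power_mult_distrib)

lemma card_boxes_containing_diff_le:
  assumes "\<bar>fst u - fst v\<bar> \<le> 1" "\<bar>snd u - snd v\<bar> \<le> 1"
  shows "card (boxes_containing L u - boxes_containing L v) \<le> 4 * 2 ^ L"
proof -
  define I1 where "I1 = {fst u - 2^L + 1 .. fst u}"
  define I2 where "I2 = {snd u - 2^L + 1 .. snd u}"
  have card: "card I1 = 2 ^ L" "card I2 = 2 ^ L" and pair: "card {a::int, c} \<le> 2" for a c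
    by (simp_all add: I1_def I2_def nat_power_eq card_insert_le_m1)
  \<comment> \<open>a box containing \<open>u\<close> but not the adjacent \<open>v\<close> lies on one of the four boundary lines\<close>
  have "boxes_containing L u - boxes_containing L v \<subseteq>
          {fst u - 2^L + 1, fst u} \<times> I2 \<union> I1 \<times> {snd u - 2^L + 1, snd u}"
    using assms unfolding boxes_containing_def I1_def I2_def by auto
  then have "card (boxes_containing L u - boxes_containing L v) \<le>
          card ({fst u - 2^L + 1, fst u} \<times> I2 \<union> I1 \<times> {snd u - 2^L + 1, snd u})"
    by (rule card_mono[rotated]) (simp add: I1_def I2_def)
  also have "\<dots> \<le> card ({fst u - 2^L + 1, fst u} \<times> I2) + card (I1 \<times> {snd u - 2^L + 1, snd u})"
    by (rule card_Un_le)
  also have "\<dots> \<le> 2 * 2 ^ L + 2 ^ L * 2"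
    unfolding card_cartesian_product card by (intro add_mono mult_right_mono mult_left_mono pair) simp_all
  finally show ?thesis by simp
qed

definition boxes_at_scales :: "nat \<Rightarrow> nat set \<Rightarrow> int \<times> int \<Rightarrow> (nat \<times> (int \<times> int)) set" where
  "boxes_at_scales k J z = (SIGMA L:(\<lambda>j. j * k) ` J. boxes_containing L z)"

lemma finite_boxes_at_scales [simp]: "finite J \<Longrightarrow> finite (boxes_at_scales k J z)"
  by (simp add: boxes_at_scales_def)

lemma sum_boxes_at_scales:
  assumes "k \<ge> 1" "finite J"
  shows "(\<Sum>p\<in>boxes_at_scales k J z. g p) = (\<Sum>j\<in>J. \<Sum>x\<in>boxes_containing (j * k) z. g (j * k, x))"
proof -
  have inj: "inj_on (\<lambda>(j, x). (j * k, x)) A" for A :: "(nat \<times> (int \<times> int)) set"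
    using assms(1) by (auto simp: inj_on_def)
  have "boxes_at_scales k J z = (\<lambda>(j, x). (j * k, x)) ` (SIGMA j:J. boxes_containing (j * k) z)"
    by (auto simp: boxes_at_scales_def)
  then have "(\<Sum>p\<in>boxes_at_scales k J z. g p) = (\<Sum>(j, x)\<in>(SIGMA j:J. boxes_containing (j * k) z). g (j * k, x))"
    by (simp only: sum.reindex[OF inj] comp_def) (simp add: case_prod_unfold)
  also have "\<dots> = (\<Sum>j\<in>J. \<Sum>x\<in>boxes_containing (j * k) z. g (j * k, x))"
    using assms(2) by (rule sum.Sigma[symmetric]) simp
  finally show ?thesis .
qed

lemma sum_psi_eq_sum_boxes_at_scales:
  assumes "k \<ge> 1" "finite J"
  shows "(\<Sum>j\<in>J. psi k b j z \<omega>) = (\<Sum>p\<in>boxes_at_scales k J z. sqrt (real k) * b (fst p) (snd p) \<omega>)"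
  using assms by (simp add: sum_boxes_at_scales psi_def)

lemma sum_squared_scales_boxes_at_scales:
  assumes "k \<ge> 1" "finite J"
  shows "(\<Sum>p\<in>boxes_at_scales k J z. (2 powr - real (fst p))\<^sup>2) = real (card J)"
  using assms by (simp add: sum_boxes_at_scales two_powr_neg_squared card_boxes_containing
      power_one_over flip: power_mult_distrib)

lemma sum_squared_scales_boxes_at_scales_diff_le:
  assumes "finite J" "\<bar>fst u - fst v\<bar> \<le> 1" "\<bar>snd u - snd v\<bar> \<le> 1"
  shows "(\<Sum>p\<in>boxes_at_scales k J u - boxes_at_scales k J v. (2 powr - real (fst p))\<^sup>2) \<le> 8"
proof -
  let ?S = "(\<lambda>j. j * k) ` J"
  let ?D = "\<lambda>L. boxes_containing L u - boxes_containing L v"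
  have "boxes_at_scales k J u - boxes_at_scales k J v = (SIGMA L:?S. ?D L)"
    by (auto simp: boxes_at_scales_def)
  moreover have "(\<Sum>p\<in>(SIGMA L:?S. ?D L). (2 powr - real (fst p))\<^sup>2) = (\<Sum>L\<in>?S. \<Sum>x\<in>?D L. (2 powr - real L)\<^sup>2)"
    using assms(1) by (subst sum.Sigma) (simp_all add: case_prod_unfold)
  ultimately have "(\<Sum>p\<in>boxes_at_scales k J u - boxes_at_scales k J v. (2 powr - real (fst p))\<^sup>2) =
       (\<Sum>L\<in>?S. real (card (?D L)) * (1/4) ^ L)"
    by (simp add: two_powr_neg_squared)
  also have "\<dots> \<le> (\<Sum>L\<in>?S. 4 * 2 ^ L * (1/4) ^ L)"
  proof (intro sum_mono mult_right_mono)
    show "real (card (?D L)) \<le> 4 * 2 ^ L" for L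
      using of_nat_mono[OF card_boxes_containing_diff_le[OF assms(2,3), of L]] by simp
  qed simp
  also have "\<dots> = 4 * (\<Sum>L\<in>?S. (1/2) ^ L)"
  proof -
    have "(2::real) ^ L * (1/4) ^ L = (1/2) ^ L" for L
      by (simp only: power_mult_distrib[symmetric]) simp
    then show ?thesis by (simp add: sum_distrib_left mult.assoc)
  qed
  also have "\<dots> \<le> 8"
    using sum_half_powers_le_two[of ?S] assms(1) by simp
  finally show ?thesis .
qed

lemma card_top_fraction_le:
  assumes "0 \<le> \<epsilon>"
  shows "real (card {nat \<lceil>(1 - \<epsilon>) * real m\<rceil>..<m}) \<le> \<epsilon> * real m"
proof -
  have "(1 - \<epsilon>) * real m \<le> real (nat \<lceil>(1 - \<epsilon>) * real m\<rceil>)"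
    by linarith
  then show ?thesis
    using assms by (cases "nat \<lceil>(1 - \<epsilon>) * real m\<rceil> \<le> m") (simp_all add: of_nat_diff algebra_simps)
qed

lemma two_power_eq_exp: "(2::real) ^ m = exp (real m * ln 2)"
  by (simp add: exp_of_nat_mult)

lemma ln2_ge_69_over_100: "69/100 \<le> ln (2::real)"
  using ln_approx_bounds[of 2 3] by (simp add: eval_nat_numeral)

lemma card_VN: "card (VN n) = 4 ^ n"
  by (simp add: VN_def card_cartesian_product nat_power_eq flip: power_mult_distrib)

lemma upper_scales_union_bound_le:
  assumes "0 < \<delta>" "1 \<le> n"
  shows "real (4 ^ n) * exp (- (5/2 * \<delta> * ln (2 ^ n))\<^sup>2 / (2 * (\<delta>\<^sup>2 * real n))) \<le> exp (- real n / 10)"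
proof -
  define L where "L = ln (2::real)"
  have L: "69/100 \<le> L" "L * (69/100) \<le> L * L"
    using ln2_ge_69_over_100 by (simp_all add: L_def)
  have "real (4 ^ n) = 2 ^ (2 * n)"
    by (simp add: power_mult)
  also have "\<dots> = exp (2 * real n * L)"
    by (simp add: two_power_eq_exp L_def mult_ac)
  finally have four: "real (4 ^ n) = exp (2 * real n * L)" .
  have exponent: "- (5/2 * \<delta> * ln (2 ^ n))\<^sup>2 / (2 * (\<delta>\<^sup>2 * real n)) = - (25/8 * real n * L\<^sup>2)"
    using assms by (simp add: L_def ln_realpow power2_eq_square field_simps)
  have "2 * real n * L - 25/8 * real n * L\<^sup>2 \<le> - real n / 10"
  proof -
    have "0 \<le> 25/8 * L\<^sup>2 - 2 * L - 1/10"
      using L unfolding power2_eq_square by linarith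
    then have "0 \<le> real n * (25/8 * L\<^sup>2 - 2 * L - 1/10)"
      by simp
    then show ?thesis by (simp add: algebra_simps)
  qed
  then show ?thesis
    unfolding four exponent by (simp flip: exp_add)
qed

lemma neighbour_union_bound_le:
  assumes "1 \<le> n" "1 \<le> k"
  shows "16 ^ n * (2 * exp (- (100 * sqrt (2 ^ k * ln (2 ^ n)))\<^sup>2 / (2 * (16 * real k))))
           \<le> exp (- real n / 10)"
proof -
  define L where "L = ln (2::real)"
  have L: "69/100 \<le> L" "L \<le> 25/36"
    using ln2_ge_69_over_100 ln2_le_25_over_36 by (simp_all add: L_def)
  have "(16::real) ^ n * 2 = 2 ^ (4 * n + 1)"
    by (simp add: power_mult)
  also have "\<dots> = exp (real (4 * n + 1) * L)"
    unfolding L_def by (rule two_power_eq_exp)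
  also have "\<dots> \<le> exp (4 * real n)"
  proof -
    have "real (4 * n + 1) * L \<le> real (4 * n + 1) * (25/36)"
      using L by (intro mult_left_mono) simp_all
    then show ?thesis
      using assms(1) by simp
  qed
  finally have count: "(16::real) ^ n * 2 \<le> exp (4 * real n)" .
  have "200 * real n * real k \<le> 10000 * real n * L * 2 ^ k / 32"
  proof -
    have "real k \<le> 2 ^ k"
      using of_nat_mono[OF less_imp_le[OF less_exp[of k]]] by simp
    moreover have "200 * 2 ^ k \<le> (10000 * L / 32) * 2 ^ k"
      using L by (intro mult_right_mono) simp_all
    ultimately have "200 * real k \<le> 10000 * L * 2 ^ k / 32"
      by linarith
    from mult_left_mono[OF this, of "real n"] show ?thesis
      by (simp add: mult_ac)
  qed
  then have "200 * real n \<le> (100 * sqrt (2 ^ k * ln (2 ^ n)))\<^sup>2 / (2 * (16 * real k))"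
    using assms by (simp add: L_def ln_realpow power_mult_distrib field_simps)
  then have "exp (- (100 * sqrt (2 ^ k * ln (2 ^ n)))\<^sup>2 / (2 * (16 * real k))) \<le> exp (- (200 * real n))"
    by simp
  with count have "16 ^ n * (2 * exp (- (100 * sqrt (2 ^ k * ln (2 ^ n)))\<^sup>2 / (2 * (16 * real k))))
      \<le> exp (4 * real n) * exp (- (200 * real n))"
    by (simp add: mult.assoc[symmetric] mult_mono)
  also have "\<dots> \<le> exp (- real n / 10)"
    by (simp flip: exp_add)
  finally show ?thesis .
qed

locale gaussian_box_field = prob_space M for M :: "'a measure" +
  fixes b :: "nat \<Rightarrow> int \<times> int \<Rightarrow> 'a \<Rightarrow> real"
  assumes indep_field: "indep_vars (\<lambda>_. borel) (\<lambda>p. b (fst p) (snd p)) UNIV"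
    and normal_field: "\<And>L x. distributed M lborel (b L x) (normal_density 0 (2 powr - real L))"
begin

lemma measurable_field [measurable]: "b L x \<in> borel_measurable M"
  using distributed_measurable[OF normal_field] by simp

lemma field_sum_abs_tail_le:
  assumes "finite I" "\<And>p. p \<in> I \<Longrightarrow> c p \<noteq> 0"
    and "(\<Sum>p\<in>I. (c p * 2 powr - real (fst p))\<^sup>2) \<le> V" "0 \<le> t"
  shows "prob {\<omega> \<in> space M. \<bar>\<Sum>p\<in>I. c p * b (fst p) (snd p) \<omega>\<bar> > t} \<le> 2 * exp (- t\<^sup>2 / (2 * V))"
  using assms indep_vars_subset[OF indep_field] normal_field
  by (intro indep_normal_sum_abs_tail_le[where \<sigma>="\<lambda>p. 2 powr - real (fst p)"]) auto

lemma field_sum_tail_le: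
  assumes "finite I" "\<And>p. p \<in> I \<Longrightarrow> c p \<noteq> 0"
    and "(\<Sum>p\<in>I. (c p * 2 powr - real (fst p))\<^sup>2) \<le> V" "0 \<le> t"
  shows "prob {\<omega> \<in> space M. (\<Sum>p\<in>I. c p * b (fst p) (snd p) \<omega>) > t} \<le> exp (- t\<^sup>2 / (2 * V))"
  using assms indep_vars_subset[OF indep_field] normal_field
  by (intro indep_normal_sum_tail_le[where \<sigma>="\<lambda>p. 2 powr - real (fst p)"]) auto

lemma psi_sum_tail_le:
  assumes "1 \<le> k" "finite J" "real k * real (card J) \<le> V" "0 \<le> t"
  shows "prob {\<omega> \<in> space M. (\<Sum>j\<in>J. psi k b j z \<omega>) > t} \<le> exp (- t\<^sup>2 / (2 * V))"
proof -
  have "(\<Sum>p\<in>boxes_at_scales k J z. (sqrt (real k) * 2 powr - real (fst p))\<^sup>2) = real k * real (card J)"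
    using assms(1,2) by (simp add: power_mult_distrib sum_distrib_left
        flip: sum_squared_scales_boxes_at_scales[of k J z])
  then show ?thesis
    using assms field_sum_tail_le[of "boxes_at_scales k J z" "\<lambda>_. sqrt (real k)" V t]
    by (simp add: sum_psi_eq_sum_boxes_at_scales)
qed

lemma phi_increment_tail_le:
  assumes "1 \<le> k" "\<bar>fst u - fst v\<bar> \<le> 1" "\<bar>snd u - snd v\<bar> \<le> 1" "0 \<le> t"
  shows "prob {\<omega> \<in> space M. \<bar>phi k n b u \<omega> - phi k n b v \<omega>\<bar> > t}
           \<le> 2 * exp (- t\<^sup>2 / (2 * (16 * real k)))"
proof -
  define A where "A = boxes_at_scales k {..<n div k} u"
  define B where "B = boxes_at_scales k {..<n div k} v"
  define c where "c p = (if p \<in> A then sqrt (real k) else - sqrt (real k))" for p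
  have "phi k n b u \<omega> - phi k n b v \<omega> = (\<Sum>p\<in>sym_diff A B. c p * b (fst p) (snd p) \<omega>)" for \<omega>
    using assms(1) by (auto simp: phi_def A_def B_def c_def sum_psi_eq_sum_boxes_at_scales
        sum_diff_sum_eq_signed_sum intro!: sum.cong)
  moreover have "(\<Sum>p\<in>sym_diff A B. (c p * 2 powr - real (fst p))\<^sup>2) \<le> 16 * real k"
  proof -
    have "(\<Sum>p\<in>sym_diff A B. (c p * 2 powr - real (fst p))\<^sup>2)
        = real k * ((\<Sum>p\<in>A - B. (2 powr - real (fst p))\<^sup>2) + (\<Sum>p\<in>B - A. (2 powr - real (fst p))\<^sup>2))"
      by (subst sum.union_disjoint) (auto simp: A_def B_def c_def power_mult_distrib sum_distrib_left distrib_left)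
    also have "\<dots> \<le> real k * (8 + 8)"
      using assms(2,3) unfolding A_def B_def
      by (intro mult_left_mono add_mono sum_squared_scales_boxes_at_scales_diff_le) simp_all
    finally show ?thesis by simp
  qed
  ultimately show ?thesis
    using assms field_sum_abs_tail_le[of "sym_diff A B" c "16 * real k" t]
    by (simp add: A_def B_def c_def)
qed

lemma upper_scales_bound:
  assumes "1 \<le> k" "1 \<le> n" "0 < \<delta>"
  shows "prob {\<omega> \<in> space M. \<forall>z\<in>VN n.
            (\<Sum>j\<in>{nat \<lceil>(1 - \<delta>^2) * real (n div k)\<rceil>..<n div k}. psi k b j z \<omega>)
              \<le> 5/2 * \<delta> * ln (2 ^ n)}
           \<ge> 1 - 2 * exp (- real n / 10)"
proof -
  let ?J = "{nat \<lceil>(1 - \<delta>^2) * real (n div k)\<rceil>..<n div k}"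
  let ?t = "5/2 * \<delta> * ln ((2::real) ^ n)"
  have "real k * real (card ?J) \<le> real k * (\<delta>\<^sup>2 * real (n div k))"
    by (intro mult_left_mono card_top_fraction_le) simp_all
  also have "\<dots> = \<delta>\<^sup>2 * real (k * (n div k))"
    by simp
  also have "\<dots> \<le> \<delta>\<^sup>2 * real n"
    by (intro mult_left_mono of_nat_mono times_div_less_eq_dividend) simp
  finally have variance: "real k * real (card ?J) \<le> \<delta>\<^sup>2 * real n" .
  have "1 - real (card (VN n)) * exp (- ?t\<^sup>2 / (2 * (\<delta>\<^sup>2 * real n)))
          \<le> prob {\<omega> \<in> space M. \<forall>z\<in>VN n. (\<Sum>j\<in>?J. psi k b j z \<omega>) \<le> ?t}"
  proof (rule prob_forall_ge_union_bound)
    show "finite (VN n)"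
      by (simp add: VN_def)
    show "{\<omega> \<in> space M. \<not> (\<Sum>j\<in>?J. psi k b j z \<omega>) \<le> ?t} \<in> events" for z
      unfolding psi_def by measurable
    show "prob {\<omega> \<in> space M. \<not> (\<Sum>j\<in>?J. psi k b j z \<omega>) \<le> ?t}
            \<le> exp (- ?t\<^sup>2 / (2 * (\<delta>\<^sup>2 * real n)))" for z
      using psi_sum_tail_le[OF assms(1) _ variance, of ?t z] assms by (simp add: not_le)
  qed
  moreover have "real (card (VN n)) * exp (- ?t\<^sup>2 / (2 * (\<delta>\<^sup>2 * real n))) \<le> exp (- real n / 10)"
    using upper_scales_union_bound_le[OF assms(3,2)] by (simp add: card_VN)
  ultimately show ?thesis
    using exp_ge_zero[of "- real n / 10"] by linarith
qed

lemma neighbour_increments_bound: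
  assumes "1 \<le> k" "1 \<le> n"
  shows "prob {\<omega> \<in> space M. \<forall>u\<in>VN n. \<forall>v\<in>VN n.
            \<bar>fst u - fst v\<bar> + \<bar>snd u - snd v\<bar> = 1 \<longrightarrow>
            \<bar>phi k n b u \<omega> - phi k n b v \<omega>\<bar> \<le> 100 * sqrt (2 ^ k * ln (2 ^ n))}
           \<ge> 1 - exp (- real n / 10)"
proof -
  let ?t = "100 * sqrt (2 ^ k * ln ((2::real) ^ n))"
  define Adj where "Adj = (SIGMA u:VN n. {v \<in> VN n. \<bar>fst u - fst v\<bar> + \<bar>snd u - snd v\<bar> = 1})"
  have "Adj \<subseteq> VN n \<times> VN n" "finite (VN n \<times> VN n)"
    by (auto simp: Adj_def VN_def)
  then have "finite Adj" "card Adj \<le> card (VN n \<times> VN n)"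
    by (auto intro: finite_subset card_mono)
  then have card_Adj: "real (card Adj) \<le> 16 ^ n"
    using of_nat_mono[of "card Adj" "card (VN n \<times> VN n)"]
    by (simp add: card_cartesian_product card_VN flip: power_mult_distrib)
  have union_bound: "1 - real (card Adj) * (2 * exp (- ?t\<^sup>2 / (2 * (16 * real k))))
          \<le> prob {\<omega> \<in> space M. \<forall>q\<in>Adj. \<bar>phi k n b (fst q) \<omega> - phi k n b (snd q) \<omega>\<bar> \<le> ?t}"
  proof (rule prob_forall_ge_union_bound)
    show "{\<omega> \<in> space M. \<not> \<bar>phi k n b (fst q) \<omega> - phi k n b (snd q) \<omega>\<bar> \<le> ?t} \<in> events" for q
      unfolding phi_def psi_def by measurable
    show "prob {\<omega> \<in> space M. \<not> \<bar>phi k n b (fst q) \<omega> - phi k n b (snd q) \<omega>\<bar> \<le> ?t}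
            \<le> 2 * exp (- ?t\<^sup>2 / (2 * (16 * real k)))" if "q \<in> Adj" for q
    proof -
      have "\<bar>fst (fst q) - fst (snd q)\<bar> \<le> 1" "\<bar>snd (fst q) - snd (snd q)\<bar> \<le> 1"
        using that by (auto simp: Adj_def)
      from phi_increment_tail_le[OF assms(1) this, of ?t] show ?thesis
        by (simp add: not_le)
    qed
  qed fact
  have numeric: "real (card Adj) * (2 * exp (- ?t\<^sup>2 / (2 * (16 * real k)))) \<le> exp (- real n / 10)"
    by (rule order_trans[OF mult_right_mono[OF card_Adj] neighbour_union_bound_le[OF assms(2,1)]]) simp
  have events_eq: "{\<omega> \<in> space M. \<forall>q\<in>Adj. \<bar>phi k n b (fst q) \<omega> - phi k n b (snd q) \<omega>\<bar> \<le> ?t} =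
      {\<omega> \<in> space M. \<forall>u\<in>VN n. \<forall>v\<in>VN n. \<bar>fst u - fst v\<bar> + \<bar>snd u - snd v\<bar> = 1 \<longrightarrow>
            \<bar>phi k n b u \<omega> - phi k n b v \<omega>\<bar> \<le> ?t}"
    unfolding Adj_def by (intro Collect_cong conj_cong refl) auto
  from union_bound numeric show ?thesis
    unfolding events_eq by linarith
qed

end

theorem lemma2p3:
  fixes M :: "'a measure" and b :: "nat \<Rightarrow> int \<times> int \<Rightarrow> 'a \<Rightarrow> real"
    and k n :: nat and \<delta> :: real
  assumes "prob_space M"
    and "prob_space.indep_vars M (\<lambda>_. borel) (\<lambda>p. b (fst p) (snd p)) UNIV"
    and "\<And>j x. distributed M lborel (b j x) (normal_density 0 (2 powr (- real j)))"
    and "k \<ge> 1" and "n \<ge> 1" and "0 < \<delta>" and "\<delta> < 1"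
  shows "measure M {\<omega> \<in> space M. \<forall>z\<in>VN n.
            (\<Sum>j\<in>{nat \<lceil>(1 - \<delta>^2) * real (n div k)\<rceil>..<n div k}. psi k b j z \<omega>)
              \<le> 5/2 * \<delta> * ln (2 ^ n)}
           \<ge> 1 - 2 * exp (- real n / 10)
       \<and> measure M {\<omega> \<in> space M. \<forall>u\<in>VN n. \<forall>v\<in>VN n.
            \<bar>fst u - fst v\<bar> + \<bar>snd u - snd v\<bar> = 1 \<longrightarrow>
            \<bar>phi k n b u \<omega> - phi k n b v \<omega>\<bar> \<le> 100 * sqrt (2 ^ k * ln (2 ^ n))}
           \<ge> 1 - exp (- real n / 10)"
proof -
  have "gaussian_box_field M b"
    using assms(1-3) by (simp add: gaussian_box_field_def gaussian_box_field_axioms_def)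
  then interpret gaussian_box_field M b .
  show ?thesis
    using upper_scales_bound[OF assms(4-6)] neighbour_increments_bound[OF assms(4,5)] by (rule conjI)
qed

end
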